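(* Let $d \ge 1$, $\sigma>0$, $M>0$, and let $k:\mathbb{R}^d \to [0,M]$ be a (measurable) non-negative bounded function that is continuous almost everywhere. Define $g:\mathbb{R}^d\to\mathbb{R}$ by $$g(\mu) = \mathbb{E}_{w\sim\mathcal{N}(\mu,\sigma^2 I)}[k(w)] = \int_{\mathbb{R}^d} \frac{1}{(2\pi\sigma^2)^{d/2}} e^{-\frac{\|w-\mu\|^2}{2\sigma^2}} k(w)\,dw .$$ Then $g$ is twice differentiable and for all $\mu_1,\mu_2\in\mathbb{R}^d$, $$\nabla g(\mu_1)^\top \big(\nabla^2 g(\mu_2)\big)\nabla g(\mu_1) \le \frac{d M^3}{\sigma^4}.$$
   Context: $\mathcal{N}(\mu,\sigma^2 I)$ denotes the Gaussian distribution on $\mathbb{R}^d$ with mean $\mu$ and covariance $\sigma^2 I$; $\nabla g$ and $\nabla^2 g$ denote the gradient and Hessian of $g$; $\|\cdot\|$ is the Euclidean norm. *)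

theory Defs
  imports "HOL-Analysis.Analysis"
begin

definition gauss_iso_density :: "'a::euclidean_space \<Rightarrow> real \<Rightarrow> 'a \<Rightarrow> real" where
  "gauss_iso_density \<mu> \<sigma> w =
     (2 * pi * \<sigma>\<^sup>2) powr (- real DIM('a) / 2) * exp (- (norm (w - \<mu>))\<^sup>2 / (2 * \<sigma>\<^sup>2))"

end

theory Submission
  imports Defs "HOL-Probability.Distributions"
begin

text \<open>
  Write \<open>\<phi>\<^sub>\<mu>\<close> for the density of \<open>N(\<mu>, \<sigma>\<^sup>2 I)\<close>. Its \<open>\<mu>\<close>-derivatives are
  \<open>\<phi>\<^sub>\<mu>(w) (w - \<mu>) / \<sigma>\<^sup>2\<close> and \<open>\<phi>\<^sub>\<mu>(w) ((w - \<mu>)(w - \<mu>)\<^sup>T / \<sigma>\<^sup>4 - I / \<sigma>\<^sup>2)\<close>, and for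
  \<open>\<mu>\<close> in a unit ball both are dominated by a fixed integrable Gaussian of twice the width,
  so \<open>g\<close> may be differentiated twice under the integral sign. With \<open>t = (w - \<mu>) \<bullet> v\<close>,
  \<open>0 \<le> k \<le> M\<close> and the second moment \<open>\<integral> \<phi>\<^sub>\<mu> t\<^sup>2 = \<sigma>\<^sup>2 |v|\<^sup>2\<close> give
  \<open>v\<^sup>T \<nabla>\<^sup>2g v \<le> M |v|\<^sup>2 / \<sigma>\<^sup>2\<close>, and \<open>|\<nabla>g|\<^sup>2 = \<integral> \<phi>\<^sub>\<mu> k t / \<sigma>\<^sup>2 \<le> M \<sigma> |\<nabla>g| / \<sigma>\<^sup>2\<close> for
  \<open>v = \<nabla>g\<close> gives \<open>|\<nabla>g| \<le> M / \<sigma>\<close>. Together this is \<open>M\<^sup>3 / \<sigma>\<^sup>4\<close>, which is at most the stated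
  bound.
\<close>

section \<open>Differentiation under the integral sign\<close>

lemma integral_dominated_convergence_at:
  fixes s :: "'a::first_countable_topology \<Rightarrow> 'b \<Rightarrow> 'c::{banach, second_countable_topology}"
  assumes "f \<in> borel_measurable M" "\<And>t. s t \<in> borel_measurable M" "integrable M w"
    and lim: "AE x in M. ((\<lambda>t. s t x) \<longlongrightarrow> f x) (at a)"
    and bound: "\<forall>\<^sub>F t in at a. AE x in M. norm (s t x) \<le> w x"
  shows "((\<lambda>t. integral\<^sup>L M (s t)) \<longlongrightarrow> integral\<^sup>L M f) (at a)"
  unfolding tendsto_at_iff_sequentially comp_def
proof (intro allI impI)
  fix X assume "\<forall>i. X i \<in> UNIV - {a}" and "X \<longlonglongrightarrow> a"
  then have X: "filterlim X (at a) sequentially"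
    by (simp add: filterlim_at)
  from filterlim_iff[THEN iffD1, OF X, rule_format, OF bound]
  obtain N where w: "\<And>n. N \<le> n \<Longrightarrow> AE x in M. norm (s (X n) x) \<le> w x"
    by (auto simp: eventually_sequentially)
  show "(\<lambda>n. integral\<^sup>L M (s (X n))) \<longlonglongrightarrow> integral\<^sup>L M f"
  proof (rule LIMSEQ_offset, rule integral_dominated_convergence)
    show "AE x in M. norm (s (X (n + N)) x) \<le> w x" for n
      by (rule w) simp
    show "AE x in M. (\<lambda>n. s (X (n + N)) x) \<longlonglongrightarrow> f x"
      using lim by eventually_elim
        (intro LIMSEQ_ignore_initial_segment filterlim_compose[OF _ X])
  qed (use assms in auto)
qed

lemma norm_linearization_error_le:
  fixes f :: "'a::{real_normed_vector, perfect_space} \<Rightarrow> 'b::real_normed_vector"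
  assumes deriv: "\<And>x. x \<in> ball \<mu> r \<Longrightarrow> (f has_derivative f' x) (at x)"
    and bound: "\<And>x h. x \<in> ball \<mu> r \<Longrightarrow> norm (f' x h) \<le> B * norm h"
    and h: "norm h < r"
  shows "norm (f (\<mu> + h) - f \<mu> - f' \<mu> h) \<le> 2 * B * norm h"
proof -
  have \<mu>: "\<mu> \<in> ball \<mu> r" using h norm_ge_zero[of h] by (simp del: norm_ge_zero)
  have "norm (f (\<mu> + h) - f \<mu> - f' \<mu> ((\<mu> + h) - \<mu>)) \<le> norm ((\<mu> + h) - \<mu>) * (2 * B)"
  proof (rule differentiable_bound_linearization[where S = "ball \<mu> r"])
    show "\<mu> + t *\<^sub>R (\<mu> + h - \<mu>) \<in> ball \<mu> r" if "t \<in> {0..1}" for t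
    proof -
      have "norm (t *\<^sub>R h) \<le> norm h"
        using that by (simp add: mult_left_le_one_le)
      then show ?thesis using h by (simp add: dist_norm)
    qed
    show "(f has_derivative f' x) (at x within ball \<mu> r)" if "x \<in> ball \<mu> r" for x
      using deriv[OF that] by (rule has_derivative_at_withinI)
    show "onorm (f' x - f' \<mu>) \<le> 2 * B" if "x \<in> ball \<mu> r" for x
    proof (rule onorm_le)
      fix h
      have "norm (f' x h - f' \<mu> h) \<le> norm (f' x h) + norm (f' \<mu> h)"
        by (rule norm_triangle_ineq4)
      also have "\<dots> \<le> 2 * B * norm h"
        using bound[OF that, of h] bound[OF \<mu>, of h] by simp
      finally show "norm ((f' x - f' \<mu>) h) \<le> 2 * B * norm h" by simp
    qed
  qed (use \<mu> in auto)
  then show ?thesis by (simp add: mult.commute)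
qed

lemma bounded_linear_integral_dominated:
  fixes L :: "'b \<Rightarrow> 'a::real_normed_vector \<Rightarrow> 'c::{banach, second_countable_topology}"
  assumes linear: "\<And>w. linear (L w)"
    and measurable: "\<And>h. (\<lambda>w. L w h) \<in> borel_measurable N"
    and bound: "\<And>w h. norm (L w h) \<le> B w * norm h"
    and integrable_B: "integrable N B"
  shows "integrable N (\<lambda>w. L w h)"
    and "bounded_linear (\<lambda>h. \<integral>w. L w h \<partial>N)"
proof -
  show integrable: "integrable N (\<lambda>w. L w h)" for h
  proof (rule Bochner_Integration.integrable_bound)
    show "integrable N (\<lambda>w. B w * norm h)" using integrable_B by simp
    show "AE w in N. norm (L w h) \<le> norm (B w * norm h)"
      by (intro AE_I2 order_trans[OF bound]) (simp add: abs_mult mult_right_mono)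
  qed (rule measurable)
  show "bounded_linear (\<lambda>h. \<integral>w. L w h \<partial>N)"
  proof (rule bounded_linear_intro[where K = "\<integral>w. B w \<partial>N"])
    show "(\<integral>w. L w (x + y) \<partial>N) = (\<integral>w. L w x \<partial>N) + (\<integral>w. L w y \<partial>N)" for x y
      using integrable by (simp add: linear_add[OF linear])
    show "(\<integral>w. L w (r *\<^sub>R x) \<partial>N) = r *\<^sub>R (\<integral>w. L w x \<partial>N)" for r x
      by (simp add: linear_scale[OF linear])
    show "norm (\<integral>w. L w x \<partial>N) \<le> norm x * (\<integral>w. B w \<partial>N)" for x
    proof -
      have "norm (\<integral>w. L w x \<partial>N) \<le> (\<integral>w. norm (L w x) \<partial>N)"
        by (rule integral_norm_bound)
      also have "\<dots> \<le> (\<integral>w. B w * norm x \<partial>N)"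
        using integrable integrable_B bound by (intro integral_mono) auto
      finally show ?thesis by (simp add: mult.commute)
    qed
  qed
qed

lemma has_derivative_integral_dominated:
  fixes f :: "'a::{real_normed_vector, perfect_space} \<Rightarrow> 'b \<Rightarrow> 'c::{banach, second_countable_topology}"
  assumes deriv: "\<And>x w. ((\<lambda>x. f x w) has_derivative f' x w) (at x)"
    and f_measurable: "\<And>x. f x \<in> borel_measurable N"
    and f'_measurable: "\<And>h. (\<lambda>w. f' \<mu> w h) \<in> borel_measurable N"
    and integrable_f: "\<And>x. integrable N (f x)"
    and bound: "\<And>x w h. x \<in> ball \<mu> 1 \<Longrightarrow> norm (f' x w h) \<le> B w * norm h"
    and integrable_B: "integrable N B"
  shows "((\<lambda>x. \<integral>w. f x w \<partial>N) has_derivative (\<lambda>h. \<integral>w. f' \<mu> w h \<partial>N)) (at \<mu>)"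
proof -
  have linear: "linear (f' \<mu> w)" for w
    using deriv has_derivative_linear by blast
  have bound_\<mu>: "norm (f' \<mu> w h) \<le> B w * norm h" for w h
    by (rule bound) simp
  note integrable_f' = bounded_linear_integral_dominated(1)[OF linear f'_measurable bound_\<mu> integrable_B]
  define R where "R h w = norm (f (\<mu> + h) w - f \<mu> w - f' \<mu> w h) / norm h" for h w
  have "((\<lambda>h. \<integral>w. R h w \<partial>N) \<longlongrightarrow> (\<integral>w. 0 \<partial>N)) (at 0)"
  proof (rule integral_dominated_convergence_at[where w = "\<lambda>w. 2 * B w"])
    show "R h \<in> borel_measurable N" for h
      unfolding R_def using f_measurable f'_measurable by measurable
    show "AE w in N. ((\<lambda>h. R h w) \<longlongrightarrow> 0) (at 0)"
      using deriv[of _ \<mu>] by (simp add: has_derivative_at R_def)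
    have "norm (R h w) \<le> 2 * B w" if "h \<in> ball 0 1 - {0}" for h w
      using norm_linearization_error_le[where f = "\<lambda>x. f x w" and f' = "\<lambda>x. f' x w"
          and \<mu> = \<mu> and r = 1 and h = h, OF deriv bound] that
      by (simp add: R_def divide_le_eq mult.commute)
    then show "\<forall>\<^sub>F h in at 0. AE w in N. norm (R h w) \<le> 2 * B w"
      by (auto simp: eventually_at dist_norm intro!: exI[of _ 1])
  qed (use integrable_B in auto)
  then have R_lim: "((\<lambda>h. \<integral>w. R h w \<partial>N) \<longlongrightarrow> 0) (at 0)" by simp
  have "((\<lambda>h. norm ((\<integral>w. f (\<mu> + h) w \<partial>N) - (\<integral>w. f \<mu> w \<partial>N) - (\<integral>w. f' \<mu> w h \<partial>N))
      / norm h) \<longlongrightarrow> 0) (at 0)"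
  proof (rule Lim_null_comparison[OF always_eventually R_lim], intro allI)
    fix h
    have "norm ((\<integral>w. f (\<mu> + h) w \<partial>N) - (\<integral>w. f \<mu> w \<partial>N) - (\<integral>w. f' \<mu> w h \<partial>N))
        = norm (\<integral>w. f (\<mu> + h) w - f \<mu> w - f' \<mu> w h \<partial>N)"
      using integrable_f integrable_f' by simp
    also have "\<dots> \<le> (\<integral>w. norm (f (\<mu> + h) w - f \<mu> w - f' \<mu> w h) \<partial>N)"
      by (rule integral_norm_bound)
    finally show "norm (norm ((\<integral>w. f (\<mu> + h) w \<partial>N) - (\<integral>w. f \<mu> w \<partial>N) - (\<integral>w. f' \<mu> w h \<partial>N))
        / norm h) \<le> (\<integral>w. R h w \<partial>N)"
      by (simp add: R_def divide_right_mono)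
  qed
  with bounded_linear_integral_dominated(2)[OF linear f'_measurable bound_\<mu> integrable_B]
  show ?thesis by (simp add: has_derivative_at)
qed

section \<open>The isotropic Gaussian density\<close>

lemma gauss_iso_density_nonneg: "0 \<le> gauss_iso_density \<mu> \<sigma> w"
  unfolding gauss_iso_density_def by simp

lemma borel_measurable_gauss_iso_density[measurable]:
  "gauss_iso_density \<mu> \<sigma> \<in> borel_measurable borel"
  unfolding gauss_iso_density_def by measurable

lemma gauss_iso_density_eq_prod_normal_density:
  fixes \<mu> w :: "'a::euclidean_space"
  assumes "\<sigma> > 0"
  shows "gauss_iso_density \<mu> \<sigma> w = (\<Prod>b\<in>Basis. normal_density (\<mu> \<bullet> b) \<sigma> (w \<bullet> b))"
proof -
  have pos: "0 < 2 * pi * \<sigma>\<^sup>2" using assms by simp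
  have "(2 * pi * \<sigma>\<^sup>2) powr (- real DIM('a) / 2) = ((2 * pi * \<sigma>\<^sup>2) powr (- 1 / 2)) ^ DIM('a)"
    using pos by (subst powr_realpow[symmetric]) (auto simp: powr_powr)
  also have "\<dots> = (\<Prod>b\<in>(Basis::'a set). 1 / sqrt (2 * pi * \<sigma>\<^sup>2))"
    using pos by (simp add: powr_minus_divide powr_half_sqrt)
  finally have const: "(2 * pi * \<sigma>\<^sup>2) powr (- real DIM('a) / 2) = \<dots>" .
  have "(norm (w - \<mu>))\<^sup>2 = (\<Sum>b\<in>Basis. (w \<bullet> b - \<mu> \<bullet> b)\<^sup>2)"
    unfolding power2_norm_eq_inner by (subst euclidean_inner) (simp add: inner_diff_left power2_eq_square)
  then have exp: "exp (- (norm (w - \<mu>))\<^sup>2 / (2 * \<sigma>\<^sup>2))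
      = (\<Prod>b\<in>Basis. exp (- (w \<bullet> b - \<mu> \<bullet> b)\<^sup>2 / (2 * \<sigma>\<^sup>2)))"
    by (simp add: exp_sum sum_divide_distrib flip: sum_negf)
  show ?thesis
    unfolding gauss_iso_density_def const exp normal_density_def by (rule prod.distrib[symmetric])
qed

lemma nn_integral_gauss_iso_density:
  fixes \<mu> :: "'a::euclidean_space"
  assumes "\<sigma> > 0"
  shows "(\<integral>\<^sup>+w. gauss_iso_density \<mu> \<sigma> w \<partial>lborel) = 1"
proof -
  have "(\<integral>\<^sup>+w. gauss_iso_density \<mu> \<sigma> w \<partial>lborel)
      = (\<integral>\<^sup>+w. (\<Prod>b\<in>Basis. ennreal (normal_density (\<mu> \<bullet> b) \<sigma> (w \<bullet> b))) \<partial>lborel)"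
    using assms by (simp add: gauss_iso_density_eq_prod_normal_density prod_ennreal)
  also have "\<dots> = (\<Prod>b\<in>Basis. \<integral>\<^sup>+t. normal_density (\<mu> \<bullet> b) \<sigma> t \<partial>lborel)"
    by (rule nn_integral_lborel_prod) auto
  also have "\<dots> = 1"
    using assms by (intro prod.neutral ballI) (simp add: nn_integral_eq_integral)
  finally show ?thesis .
qed

lemma integrable_gauss_iso_density:
  fixes \<mu> :: "'a::euclidean_space"
  assumes "\<sigma> > 0"
  shows "integrable lborel (gauss_iso_density \<mu> \<sigma>)"
  using assms
  by (intro integrableI_nonneg) (auto simp: gauss_iso_density_nonneg nn_integral_gauss_iso_density)

lemma integral_gauss_iso_density:
  fixes \<mu> :: "'a::euclidean_space"
  assumes "\<sigma> > 0"
  shows "(\<integral>w. gauss_iso_density \<mu> \<sigma> w \<partial>lborel) = 1"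
  using assms
  by (subst integral_eq_nn_integral) (auto simp: gauss_iso_density_nonneg nn_integral_gauss_iso_density)

lemma gauss_iso_density_has_derivative:
  fixes \<mu> w :: "'a::euclidean_space"
  assumes "\<sigma> > 0"
  shows "((\<lambda>\<mu>. gauss_iso_density \<mu> \<sigma> w) has_derivative
           (\<lambda>h. gauss_iso_density \<mu> \<sigma> w * ((w - \<mu>) \<bullet> h / \<sigma>\<^sup>2))) (at \<mu>)"
  unfolding gauss_iso_density_def power2_norm_eq_inner
  by (rule derivative_eq_intros refl)+
    (use assms in \<open>auto simp: inner_commute field_simps\<close>)

lemma exp_neg_square_weighted_le:
  fixes \<sigma> r z :: real
  assumes \<sigma>: "\<sigma> > 0" and r: "r \<ge> 0" and z: "0 \<le> z" "z \<le> r + 1"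
  shows "exp (- r\<^sup>2 / (2 * \<sigma>\<^sup>2)) * (1 + r + r\<^sup>2 / \<sigma>\<^sup>2)
         \<le> (6 + 4 * \<sigma>\<^sup>2) * exp (1 / (4 * \<sigma>\<^sup>2)) * exp (- z\<^sup>2 / (8 * \<sigma>\<^sup>2))"
proof -
  txt \<open>Half of the exponent absorbs the polynomial factor via \<open>1 + t \<le> exp t\<close>; the other
    half survives the shift from \<open>r\<close> to \<open>z \<le> r + 1\<close>.\<close>
  define t where "t = r\<^sup>2 / (4 * \<sigma>\<^sup>2)"
  have \<sigma>2: "\<sigma>\<^sup>2 > 0" using \<sigma> by simp
  have t: "t \<ge> 0" unfolding t_def using \<sigma>2 by simp
  have r_le: "2 * r \<le> r\<^sup>2 + 1"
    using zero_le_power2[of "r - 1"] by (simp add: power2_diff)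
  have "t * (4 * \<sigma>\<^sup>2 + 4) = r\<^sup>2 + r\<^sup>2 / \<sigma>\<^sup>2"
    using \<sigma>2 by (simp add: t_def field_simps)
  then have "1 + r + r\<^sup>2 / \<sigma>\<^sup>2 \<le> 2 + t * (4 * \<sigma>\<^sup>2 + 4)"
    using r r_le by linarith
  also have "\<dots> \<le> (6 + 4 * \<sigma>\<^sup>2) * (1 + t)"
    using t \<sigma>2 by (simp add: algebra_simps)
  also have "\<dots> \<le> (6 + 4 * \<sigma>\<^sup>2) * exp t"
    using \<sigma>2 by (intro mult_left_mono) (auto simp: exp_ge_add_one_self)
  finally have poly: "1 + r + r\<^sup>2 / \<sigma>\<^sup>2 \<le> (6 + 4 * \<sigma>\<^sup>2) * exp t" .
  have "z\<^sup>2 \<le> (r + 1)\<^sup>2" using z by (intro power_mono) auto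
  then have shift: "- t \<le> 1 / (4 * \<sigma>\<^sup>2) - z\<^sup>2 / (8 * \<sigma>\<^sup>2)"
    using r_le \<sigma>2 by (simp add: t_def field_simps power2_sum)
  have "exp (- r\<^sup>2 / (2 * \<sigma>\<^sup>2)) * (1 + r + r\<^sup>2 / \<sigma>\<^sup>2) \<le> exp (- 2 * t) * ((6 + 4 * \<sigma>\<^sup>2) * exp t)"
    using poly \<sigma>2 r by (intro mult_mono) (auto simp: t_def)
  also have "\<dots> = (6 + 4 * \<sigma>\<^sup>2) * exp (- t)"
    by (simp add: mult_exp_exp)
  also have "\<dots> \<le> (6 + 4 * \<sigma>\<^sup>2) * exp (1 / (4 * \<sigma>\<^sup>2) - z\<^sup>2 / (8 * \<sigma>\<^sup>2))"
    using shift \<sigma>2 by (intro mult_left_mono) auto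
  finally show ?thesis by (simp add: exp_diff exp_minus field_simps)
qed

lemma gauss_iso_density_double_width:
  fixes \<mu> w :: "'a::euclidean_space"
  assumes "\<sigma> > 0"
  shows "2 ^ DIM('a) * gauss_iso_density \<mu> (2 * \<sigma>) w
    = (2 * pi * \<sigma>\<^sup>2) powr (- real DIM('a) / 2) * exp (- (norm (w - \<mu>))\<^sup>2 / (8 * \<sigma>\<^sup>2))"
proof -
  define d where "d = real DIM('a)"
  have "(4::real) powr (- d / 2) = (2 powr 2) powr (- d / 2)" by simp
  also have "\<dots> = 1 / 2 ^ DIM('a)" by (simp add: d_def powr_powr powr_minus_divide powr_realpow)
  finally have four: "(4::real) powr (- d / 2) = 1 / 2 ^ DIM('a)" .
  have "2 * pi * (2 * \<sigma>)\<^sup>2 = 4 * (2 * pi * \<sigma>\<^sup>2)" by (simp add: power_mult_distrib)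
  then have "(2 * pi * (2 * \<sigma>)\<^sup>2) powr (- d / 2) = 4 powr (- d / 2) * (2 * pi * \<sigma>\<^sup>2) powr (- d / 2)"
    by (simp only:) (rule powr_mult)
  then show ?thesis
    unfolding gauss_iso_density_def d_def[symmetric] four by (simp add: power_mult_distrib)
qed

text \<open>For centres \<open>x\<close> within distance 1 of \<open>\<mu>\<close>, a single integrable majorant of the density
  and of its first two \<open>x\<close>-derivatives.\<close>

definition gauss_envelope :: "real \<Rightarrow> 'a::euclidean_space \<Rightarrow> 'a \<Rightarrow> real" where
  "gauss_envelope \<sigma> \<mu> w =
     2 ^ DIM('a) * (6 + 4 * \<sigma>\<^sup>2) * exp (1 / (4 * \<sigma>\<^sup>2)) * gauss_iso_density \<mu> (2 * \<sigma>) w"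

lemma borel_measurable_gauss_envelope[measurable]: "gauss_envelope \<sigma> \<mu> \<in> borel_measurable borel"
  unfolding gauss_envelope_def by measurable

lemma integrable_gauss_envelope:
  fixes \<mu> :: "'a::euclidean_space"
  assumes "\<sigma> > 0"
  shows "integrable lborel (gauss_envelope \<sigma> \<mu>)"
  unfolding gauss_envelope_def using integrable_gauss_iso_density[of "2 * \<sigma>" \<mu>] assms by simp

lemma gauss_iso_density_weighted_le_envelope:
  fixes x \<mu> w :: "'a::euclidean_space"
  assumes \<sigma>: "\<sigma> > 0" and x: "x \<in> ball \<mu> 1"
    and a: "a \<le> 1 + norm (w - x) + (norm (w - x))\<^sup>2 / \<sigma>\<^sup>2"
  shows "gauss_iso_density x \<sigma> w * a \<le> gauss_envelope \<sigma> \<mu> w"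
proof -
  define c where "c = (2 * pi * \<sigma>\<^sup>2) powr (- real DIM('a) / 2)"
  have "norm (w - \<mu>) \<le> norm (w - x) + 1"
    using x norm_triangle_ineq[of "w - x" "x - \<mu>"] by (simp add: dist_norm norm_minus_commute)
  then have weighted: "exp (- (norm (w - x))\<^sup>2 / (2 * \<sigma>\<^sup>2)) * (1 + norm (w - x) + (norm (w - x))\<^sup>2 / \<sigma>\<^sup>2)
      \<le> (6 + 4 * \<sigma>\<^sup>2) * exp (1 / (4 * \<sigma>\<^sup>2)) * exp (- (norm (w - \<mu>))\<^sup>2 / (8 * \<sigma>\<^sup>2))"
    by (intro exp_neg_square_weighted_le \<sigma>) auto
  have "gauss_iso_density x \<sigma> w * a \<le> gauss_iso_density x \<sigma> w * (1 + norm (w - x) + (norm (w - x))\<^sup>2 / \<sigma>\<^sup>2)"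
    using a by (rule mult_left_mono) (rule gauss_iso_density_nonneg)
  also have "\<dots> = c * (exp (- (norm (w - x))\<^sup>2 / (2 * \<sigma>\<^sup>2)) * (1 + norm (w - x) + (norm (w - x))\<^sup>2 / \<sigma>\<^sup>2))"
    unfolding gauss_iso_density_def c_def by (simp only: mult.assoc)
  also have "\<dots> \<le> c * ((6 + 4 * \<sigma>\<^sup>2) * exp (1 / (4 * \<sigma>\<^sup>2)) * exp (- (norm (w - \<mu>))\<^sup>2 / (8 * \<sigma>\<^sup>2)))"
    using weighted by (rule mult_left_mono) (simp add: c_def)
  also have "\<dots> = (6 + 4 * \<sigma>\<^sup>2) * exp (1 / (4 * \<sigma>\<^sup>2)) * (2 ^ DIM('a) * gauss_iso_density \<mu> (2 * \<sigma>) w)"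
    unfolding gauss_iso_density_double_width[OF \<sigma>] c_def by (simp only: ac_simps)
  also have "\<dots> = gauss_envelope \<sigma> \<mu> w"
    by (simp add: gauss_envelope_def ac_simps)
  finally show ?thesis .
qed

section \<open>Gaussian smoothing of a bounded function\<close>

locale gaussian_smoothing =
  fixes k :: "'a::euclidean_space \<Rightarrow> real" and \<sigma> M :: real
  assumes sigma_pos: "\<sigma> > 0"
    and borel_measurable_k[measurable]: "k \<in> borel_measurable lborel"
    and k_nonneg: "\<And>w. 0 \<le> k w" and k_le: "\<And>w. k w \<le> M"
begin

definition grad_integrand :: "'a \<Rightarrow> 'a \<Rightarrow> 'a" where
  "grad_integrand \<mu> w = (gauss_iso_density \<mu> \<sigma> w * k w / \<sigma>\<^sup>2) *\<^sub>R (w - \<mu>)"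

definition hessian_integrand :: "'a \<Rightarrow> 'a \<Rightarrow> 'a \<Rightarrow> 'a" where
  "hessian_integrand \<mu> w h =
     (gauss_iso_density \<mu> \<sigma> w * k w / \<sigma>\<^sup>2) *\<^sub>R (((w - \<mu>) \<bullet> h / \<sigma>\<^sup>2) *\<^sub>R (w - \<mu>) - h)"

definition gradient :: "'a \<Rightarrow> 'a" where
  "gradient \<mu> = (\<integral>w. grad_integrand \<mu> w \<partial>lborel)"

definition hessian :: "'a \<Rightarrow> 'a \<Rightarrow> 'a" where
  "hessian \<mu> h = (\<integral>w. hessian_integrand \<mu> w h \<partial>lborel)"

lemma M_nonneg: "0 \<le> M"
  using k_nonneg k_le order_trans by blast

lemma borel_measurable_grad_integrand[measurable]: "grad_integrand \<mu> \<in> borel_measurable lborel"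
  unfolding grad_integrand_def by measurable

lemma borel_measurable_hessian_integrand[measurable]:
  "(\<lambda>w. hessian_integrand \<mu> w h) \<in> borel_measurable lborel"
  unfolding hessian_integrand_def by measurable

lemma gauss_iso_density_times_k_le:
  "gauss_iso_density \<mu> \<sigma> w * k w / \<sigma>\<^sup>2 * a \<le> M / \<sigma>\<^sup>2 * (gauss_iso_density \<mu> \<sigma> w * a)"
  if "0 \<le> a"
  using that gauss_iso_density_nonneg[of \<mu> \<sigma> w] k_nonneg[of w] k_le[of w]
  by (simp add: mult_left_mono mult_right_mono divide_right_mono mult.assoc mult.left_commute)

lemma norm_grad_integrand_le:
  assumes "x \<in> ball \<mu> 1"
  shows "norm (grad_integrand x w) \<le> M / \<sigma>\<^sup>2 * gauss_envelope \<sigma> \<mu> w"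
proof -
  have "norm (grad_integrand x w) = gauss_iso_density x \<sigma> w * k w / \<sigma>\<^sup>2 * norm (w - x)"
    using gauss_iso_density_nonneg[of x \<sigma> w] k_nonneg[of w] by (simp add: grad_integrand_def)
  also have "\<dots> \<le> M / \<sigma>\<^sup>2 * (gauss_iso_density x \<sigma> w * norm (w - x))"
    by (rule gauss_iso_density_times_k_le) simp
  also have "\<dots> \<le> M / \<sigma>\<^sup>2 * gauss_envelope \<sigma> \<mu> w"
    using gauss_iso_density_weighted_le_envelope[OF sigma_pos assms] M_nonneg
    by (intro mult_left_mono) auto
  finally show ?thesis .
qed

lemma norm_hessian_integrand_le:
  assumes "x \<in> ball \<mu> 1"
  shows "norm (hessian_integrand x w h) \<le> M / \<sigma>\<^sup>2 * gauss_envelope \<sigma> \<mu> w * norm h"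
proof -
  let ?r = "norm (w - x)"
  have "norm (((w - x) \<bullet> h / \<sigma>\<^sup>2) *\<^sub>R (w - x) - h) \<le> \<bar>(w - x) \<bullet> h\<bar> / \<sigma>\<^sup>2 * ?r + norm h"
    using norm_triangle_ineq4[of "((w - x) \<bullet> h / \<sigma>\<^sup>2) *\<^sub>R (w - x)" h] by simp
  also have "\<dots> \<le> norm h * ?r / \<sigma>\<^sup>2 * ?r + norm h"
    using Cauchy_Schwarz_ineq2[of "w - x" h]
    by (intro add_right_mono mult_right_mono divide_right_mono) (auto simp: mult.commute)
  also have "\<dots> = (1 + ?r\<^sup>2 / \<sigma>\<^sup>2) * norm h"
    by (simp add: field_simps power2_eq_square)
  finally have factor: "norm (((w - x) \<bullet> h / \<sigma>\<^sup>2) *\<^sub>R (w - x) - h) \<le> (1 + ?r\<^sup>2 / \<sigma>\<^sup>2) * norm h" .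
  have "norm (hessian_integrand x w h)
      = gauss_iso_density x \<sigma> w * k w / \<sigma>\<^sup>2 * norm (((w - x) \<bullet> h / \<sigma>\<^sup>2) *\<^sub>R (w - x) - h)"
    using gauss_iso_density_nonneg[of x \<sigma> w] k_nonneg[of w] by (simp add: hessian_integrand_def)
  also have "\<dots> \<le> gauss_iso_density x \<sigma> w * k w / \<sigma>\<^sup>2 * ((1 + ?r\<^sup>2 / \<sigma>\<^sup>2) * norm h)"
    using factor gauss_iso_density_nonneg[of x \<sigma> w] k_nonneg[of w] by (intro mult_left_mono) auto
  also have "\<dots> \<le> M / \<sigma>\<^sup>2 * (gauss_iso_density x \<sigma> w * ((1 + ?r\<^sup>2 / \<sigma>\<^sup>2) * norm h))"
    by (rule gauss_iso_density_times_k_le) simp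
  also have "\<dots> = M / \<sigma>\<^sup>2 * (gauss_iso_density x \<sigma> w * (1 + ?r\<^sup>2 / \<sigma>\<^sup>2) * norm h)"
    by (simp only: mult.assoc)
  also have "\<dots> \<le> M / \<sigma>\<^sup>2 * (gauss_envelope \<sigma> \<mu> w * norm h)"
    using gauss_iso_density_weighted_le_envelope[OF sigma_pos assms] M_nonneg
    by (intro mult_left_mono mult_right_mono) auto
  finally show ?thesis by (simp add: mult.assoc)
qed

lemma integrable_grad_integrand: "integrable lborel (grad_integrand \<mu>)"
proof (rule Bochner_Integration.integrable_bound)
  show "integrable lborel (\<lambda>w. M / \<sigma>\<^sup>2 * gauss_envelope \<sigma> \<mu> w)"
    using integrable_gauss_envelope[OF sigma_pos] by (rule integrable_mult_right)
  show "AE w in lborel. norm (grad_integrand \<mu> w) \<le> norm (M / \<sigma>\<^sup>2 * gauss_envelope \<sigma> \<mu> w)"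
    by (intro AE_I2 order_trans[OF norm_grad_integrand_le[of \<mu> \<mu>]]) (auto intro: divide_right_mono)
qed measurable

lemma integrable_hessian_integrand: "integrable lborel (\<lambda>w. hessian_integrand \<mu> w h)"
proof (rule Bochner_Integration.integrable_bound)
  show "integrable lborel (\<lambda>w. M / \<sigma>\<^sup>2 * gauss_envelope \<sigma> \<mu> w * norm h)"
    using integrable_gauss_envelope[OF sigma_pos] by (intro integrable_mult_left integrable_mult_right)
  show "AE w in lborel. norm (hessian_integrand \<mu> w h)
      \<le> norm (M / \<sigma>\<^sup>2 * gauss_envelope \<sigma> \<mu> w * norm h)"
    by (intro AE_I2 order_trans[OF norm_hessian_integrand_le[of \<mu> \<mu>]]) (auto intro: divide_right_mono)
qed measurable

lemma grad_integrand_has_derivative: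
  "((\<lambda>x. grad_integrand x w) has_derivative hessian_integrand x w) (at x)"
proof -
  have "((\<lambda>x. gauss_iso_density x \<sigma> w * (k w / \<sigma>\<^sup>2)) has_derivative
      (\<lambda>h. gauss_iso_density x \<sigma> w * ((w - x) \<bullet> h / \<sigma>\<^sup>2) * (k w / \<sigma>\<^sup>2))) (at x)"
    by (rule has_derivative_mult_left[OF gauss_iso_density_has_derivative[OF sigma_pos]])
  then have "((\<lambda>x. (gauss_iso_density x \<sigma> w * (k w / \<sigma>\<^sup>2)) *\<^sub>R (w - x)) has_derivative
      (\<lambda>h. (gauss_iso_density x \<sigma> w * (k w / \<sigma>\<^sup>2)) *\<^sub>R (0 - h)
        + (gauss_iso_density x \<sigma> w * ((w - x) \<bullet> h / \<sigma>\<^sup>2) * (k w / \<sigma>\<^sup>2)) *\<^sub>R (w - x))) (at x)"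
    by (intro has_derivative_scaleR has_derivative_diff has_derivative_const has_derivative_ident)
  then show ?thesis
    unfolding grad_integrand_def[abs_def] hessian_integrand_def times_divide_eq_right[symmetric]
    by (rule has_derivative_eq_rhs) (simp add: fun_eq_iff scaleR_right_diff_distrib mult_ac)
qed

lemma integrable_smoothing_integrand: "integrable lborel (\<lambda>w. gauss_iso_density \<mu> \<sigma> w * k w)"
proof (rule Bochner_Integration.integrable_bound)
  show "integrable lborel (\<lambda>w. M * gauss_iso_density \<mu> \<sigma> w)"
    using integrable_gauss_iso_density[OF sigma_pos] by (rule integrable_mult_right)
  show "AE w in lborel. norm (gauss_iso_density \<mu> \<sigma> w * k w) \<le> norm (M * gauss_iso_density \<mu> \<sigma> w)"
    by (intro AE_I2)
      (simp add: abs_mult gauss_iso_density_nonneg k_nonneg M_nonneg mult.commute[of M] mult_left_mono k_le)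
qed measurable

lemma norm_inner_grad_integrand_le:
  assumes "x \<in> ball \<mu> 1"
  shows "norm (h \<bullet> grad_integrand x w) \<le> M / \<sigma>\<^sup>2 * gauss_envelope \<sigma> \<mu> w * norm h"
proof -
  have "norm (h \<bullet> grad_integrand x w) \<le> norm (grad_integrand x w) * norm h"
    using Cauchy_Schwarz_ineq2[of h "grad_integrand x w"] by (simp add: mult.commute)
  also have "\<dots> \<le> M / \<sigma>\<^sup>2 * gauss_envelope \<sigma> \<mu> w * norm h"
    using norm_grad_integrand_le[OF assms] by (rule mult_right_mono) simp
  finally show ?thesis .
qed

lemma smoothing_integrand_has_derivative:
  "((\<lambda>x. gauss_iso_density x \<sigma> w * k w) has_derivative (\<lambda>h. h \<bullet> grad_integrand x w)) (at x)"
  using has_derivative_mult_left[OF gauss_iso_density_has_derivative[OF sigma_pos], where y = "k w"]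
  by (rule has_derivative_eq_rhs) (simp add: fun_eq_iff grad_integrand_def inner_commute mult_ac)

lemma has_derivative_smoothing:
  "((\<lambda>\<mu>. \<integral>w. gauss_iso_density \<mu> \<sigma> w * k w \<partial>lborel) has_derivative (\<lambda>h. h \<bullet> gradient \<mu>)) (at \<mu>)"
proof -
  have "integrable lborel (\<lambda>w. M / \<sigma>\<^sup>2 * gauss_envelope \<sigma> \<mu> w)"
    using integrable_gauss_envelope[OF sigma_pos] by (rule integrable_mult_right)
  from has_derivative_integral_dominated[OF smoothing_integrand_has_derivative _ _
      integrable_smoothing_integrand norm_inner_grad_integrand_le this]
  have "((\<lambda>\<mu>. \<integral>w. gauss_iso_density \<mu> \<sigma> w * k w \<partial>lborel) has_derivative
      (\<lambda>h. \<integral>w. h \<bullet> grad_integrand \<mu> w \<partial>lborel)) (at \<mu>)"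
    by measurable
  then show ?thesis
    using integrable_grad_integrand by (simp add: gradient_def)
qed

lemma has_derivative_gradient: "(gradient has_derivative hessian \<mu>) (at \<mu>)"
proof -
  have "integrable lborel (\<lambda>w. M / \<sigma>\<^sup>2 * gauss_envelope \<sigma> \<mu> w)"
    using integrable_gauss_envelope[OF sigma_pos] by (rule integrable_mult_right)
  from has_derivative_integral_dominated[OF grad_integrand_has_derivative
      borel_measurable_grad_integrand borel_measurable_hessian_integrand integrable_grad_integrand
      norm_hessian_integrand_le this]
  show ?thesis unfolding gradient_def[abs_def] hessian_def[abs_def] .
qed

end

text \<open>Smoothing the constant 1 gives the constant 1, so its Hessian vanishes; written out, this
  is the second moment of the Gaussian.\<close>

lemma hessian_smoothing_one_eq_zero:
  fixes \<mu> v :: "'a::euclidean_space"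
  assumes \<sigma>: "\<sigma> > 0"
  shows "gaussian_smoothing.hessian (\<lambda>_. 1) \<sigma> \<mu> v = (0::'a)"
proof -
  interpret unit: gaussian_smoothing "\<lambda>_. 1" \<sigma> 1
    using \<sigma> by unfold_locales auto
  have gradient_zero: "unit.gradient x = 0" for x
  proof -
    have "((\<lambda>_. 1::real) has_derivative (\<lambda>h. h \<bullet> unit.gradient x)) (at x)"
      using unit.has_derivative_smoothing[of x] by (simp add: integral_gauss_iso_density[OF \<sigma>])
    from has_derivative_unique[OF this has_derivative_const]
    have "unit.gradient x \<bullet> unit.gradient x = 0" by meson
    then show ?thesis by simp
  qed
  have "unit.gradient = (\<lambda>_. 0)"
    using gradient_zero by (rule ext)
  from unit.has_derivative_gradient[of \<mu>, unfolded this]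
  have "((\<lambda>_. 0) has_derivative unit.hessian \<mu>) (at \<mu>)" .
  from has_derivative_unique[OF this has_derivative_const]
  show ?thesis by meson
qed

lemma gauss_iso_density_second_moment:
  fixes \<mu> v :: "'a::euclidean_space"
  assumes \<sigma>: "\<sigma> > 0"
  shows "integrable lborel (\<lambda>w. gauss_iso_density \<mu> \<sigma> w * ((w - \<mu>) \<bullet> v)\<^sup>2)"
    and "(\<integral>w. gauss_iso_density \<mu> \<sigma> w * ((w - \<mu>) \<bullet> v)\<^sup>2 \<partial>lborel) = \<sigma>\<^sup>2 * (norm v)\<^sup>2"
proof -
  interpret unit: gaussian_smoothing "\<lambda>_. 1" \<sigma> 1
    using \<sigma> by unfold_locales auto
  define X where "X w = unit.hessian_integrand \<mu> w v \<bullet> v" for w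
  have integrable_X: "integrable lborel X"
    unfolding X_def using unit.integrable_hessian_integrand by (rule integrable_inner_left)
  have integral_X: "(\<integral>w. X w \<partial>lborel) = 0"
    using hessian_smoothing_one_eq_zero[OF \<sigma>, of \<mu> v] unit.integrable_hessian_integrand[of \<mu> v]
    by (simp add: X_def unit.hessian_def)
  have "gauss_iso_density \<mu> \<sigma> w * ((w - \<mu>) \<bullet> v)\<^sup>2
      = \<sigma> ^ 4 * X w + \<sigma>\<^sup>2 * (norm v)\<^sup>2 * gauss_iso_density \<mu> \<sigma> w" for w
  proof -
    have "X w = gauss_iso_density \<mu> \<sigma> w * 1 / \<sigma>\<^sup>2
        * ((w - \<mu>) \<bullet> v / \<sigma>\<^sup>2 * ((w - \<mu>) \<bullet> v) - (norm v)\<^sup>2)"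
      by (simp only: X_def unit.hessian_integrand_def inner_scaleR_left inner_diff_left
          power2_norm_eq_inner)
    then show ?thesis
      using \<sigma> by (simp add: field_simps power2_eq_square power4_eq_xxxx)
  qed
  then have moment_eq: "(\<lambda>w. gauss_iso_density \<mu> \<sigma> w * ((w - \<mu>) \<bullet> v)\<^sup>2)
      = (\<lambda>w. \<sigma> ^ 4 * X w + \<sigma>\<^sup>2 * (norm v)\<^sup>2 * gauss_iso_density \<mu> \<sigma> w)"
    by (rule ext)
  show "integrable lborel (\<lambda>w. gauss_iso_density \<mu> \<sigma> w * ((w - \<mu>) \<bullet> v)\<^sup>2)"
    unfolding moment_eq using integrable_X integrable_gauss_iso_density[OF \<sigma>]
    by (intro Bochner_Integration.integrable_add integrable_mult_right)
  show "(\<integral>w. gauss_iso_density \<mu> \<sigma> w * ((w - \<mu>) \<bullet> v)\<^sup>2 \<partial>lborel) = \<sigma>\<^sup>2 * (norm v)\<^sup>2"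
    unfolding moment_eq
    using integrable_X integrable_gauss_iso_density[OF \<sigma>, of \<mu>] integral_X
      integral_gauss_iso_density[OF \<sigma>, of \<mu>]
    by (simp add: Bochner_Integration.integral_add)
qed

lemma gauss_iso_density_abs_moment_le:
  fixes \<mu> v :: "'a::euclidean_space"
  assumes \<sigma>: "\<sigma> > 0"
  shows "integrable lborel (\<lambda>w. gauss_iso_density \<mu> \<sigma> w * \<bar>(w - \<mu>) \<bullet> v\<bar>)"
    and "(\<integral>w. gauss_iso_density \<mu> \<sigma> w * \<bar>(w - \<mu>) \<bullet> v\<bar> \<partial>lborel) \<le> \<sigma> * norm v"
proof -
  let ?t = "\<lambda>w. (w - \<mu>) \<bullet> v"
  note second_moment = gauss_iso_density_second_moment[OF \<sigma>, of \<mu> v]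
  have weighted_abs_le: "gauss_iso_density \<mu> \<sigma> w * \<bar>?t w\<bar>
      \<le> gauss_iso_density \<mu> \<sigma> w * (?t w)\<^sup>2 / (2 * a) + a / 2 * gauss_iso_density \<mu> \<sigma> w"
    if "a > 0" for a w
  proof -
    have "2 * a * \<bar>?t w\<bar> \<le> (?t w)\<^sup>2 + a\<^sup>2"
      using zero_le_power2[of "\<bar>?t w\<bar> - a"] by (simp add: power2_diff mult_ac)
    then have "\<bar>?t w\<bar> \<le> (?t w)\<^sup>2 / (2 * a) + a / 2"
      using that by (simp add: field_simps power2_eq_square)
    then have "gauss_iso_density \<mu> \<sigma> w * \<bar>?t w\<bar>
        \<le> gauss_iso_density \<mu> \<sigma> w * ((?t w)\<^sup>2 / (2 * a) + a / 2)"
      by (rule mult_left_mono) (rule gauss_iso_density_nonneg)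
    then show ?thesis by (simp add: distrib_left mult.commute)
  qed
  show integrable: "integrable lborel (\<lambda>w. gauss_iso_density \<mu> \<sigma> w * \<bar>?t w\<bar>)"
  proof (rule Bochner_Integration.integrable_bound)
    show "integrable lborel (\<lambda>w. gauss_iso_density \<mu> \<sigma> w * (?t w)\<^sup>2 / (2 * 1) + 1 / 2 * gauss_iso_density \<mu> \<sigma> w)"
      using second_moment(1) integrable_gauss_iso_density[OF \<sigma>]
      by (intro Bochner_Integration.integrable_add integrable_divide integrable_mult_right)
    show "AE w in lborel. norm (gauss_iso_density \<mu> \<sigma> w * \<bar>?t w\<bar>)
        \<le> norm (gauss_iso_density \<mu> \<sigma> w * (?t w)\<^sup>2 / (2 * 1) + 1 / 2 * gauss_iso_density \<mu> \<sigma> w)"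
      using weighted_abs_le[of 1] gauss_iso_density_nonneg[of \<mu> \<sigma>] by (intro AE_I2) auto
  qed measurable
  show "(\<integral>w. gauss_iso_density \<mu> \<sigma> w * \<bar>?t w\<bar> \<partial>lborel) \<le> \<sigma> * norm v"
  proof (cases "v = 0")
    case False
    define a where "a = \<sigma> * norm v"
    have a: "a > 0" using \<sigma> False by (simp add: a_def)
    have "(\<integral>w. gauss_iso_density \<mu> \<sigma> w * \<bar>?t w\<bar> \<partial>lborel)
        \<le> (\<integral>w. gauss_iso_density \<mu> \<sigma> w * (?t w)\<^sup>2 / (2 * a) + a / 2 * gauss_iso_density \<mu> \<sigma> w \<partial>lborel)"
      using integrable second_moment(1) integrable_gauss_iso_density[OF \<sigma>] weighted_abs_le[OF a]
      by (intro integral_mono Bochner_Integration.integrable_add integrable_divide integrable_mult_right)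
    also have "\<dots> = \<sigma>\<^sup>2 * (norm v)\<^sup>2 / (2 * a) + a / 2"
      using second_moment integrable_gauss_iso_density[OF \<sigma>, of \<mu>] integral_gauss_iso_density[OF \<sigma>, of \<mu>]
      by (simp add: Bochner_Integration.integral_add)
    also have "\<dots> = \<sigma> * norm v"
      using a by (simp add: a_def field_simps power2_eq_square)
    finally show ?thesis .
  qed simp
qed

context gaussian_smoothing
begin

lemma hessian_inner_le: "hessian \<mu> v \<bullet> v \<le> M * (norm v)\<^sup>2 / \<sigma>\<^sup>2"
proof -
  let ?t = "\<lambda>w. (w - \<mu>) \<bullet> v"
  note second_moment = gauss_iso_density_second_moment[OF sigma_pos, of \<mu> v]
  have "hessian \<mu> v \<bullet> v = (\<integral>w. hessian_integrand \<mu> w v \<bullet> v \<partial>lborel)"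
    using integrable_hessian_integrand by (simp add: hessian_def)
  also have "\<dots> \<le> (\<integral>w. M / \<sigma>\<^sup>2 * (gauss_iso_density \<mu> \<sigma> w * (?t w)\<^sup>2 / \<sigma>\<^sup>2) \<partial>lborel)"
  proof (rule integral_mono)
    show "integrable lborel (\<lambda>w. hessian_integrand \<mu> w v \<bullet> v)"
      using integrable_hessian_integrand by (rule integrable_inner_left)
    show "integrable lborel (\<lambda>w. M / \<sigma>\<^sup>2 * (gauss_iso_density \<mu> \<sigma> w * (?t w)\<^sup>2 / \<sigma>\<^sup>2))"
      using second_moment(1) by (intro integrable_mult_right integrable_divide)
    fix w
    have "hessian_integrand \<mu> w v \<bullet> v
        = gauss_iso_density \<mu> \<sigma> w * k w / \<sigma>\<^sup>2 * (?t w / \<sigma>\<^sup>2 * ?t w - (norm v)\<^sup>2)"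
      by (simp only: hessian_integrand_def inner_scaleR_left inner_diff_left power2_norm_eq_inner)
    also have "\<dots> \<le> gauss_iso_density \<mu> \<sigma> w * k w / \<sigma>\<^sup>2 * ((?t w)\<^sup>2 / \<sigma>\<^sup>2)"
      using gauss_iso_density_nonneg[of \<mu> \<sigma> w] k_nonneg[of w]
      by (intro mult_left_mono) (auto simp: power2_eq_square)
    also have "\<dots> \<le> M / \<sigma>\<^sup>2 * (gauss_iso_density \<mu> \<sigma> w * ((?t w)\<^sup>2 / \<sigma>\<^sup>2))"
      by (rule gauss_iso_density_times_k_le) simp
    finally show "hessian_integrand \<mu> w v \<bullet> v
        \<le> M / \<sigma>\<^sup>2 * (gauss_iso_density \<mu> \<sigma> w * (?t w)\<^sup>2 / \<sigma>\<^sup>2)"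
      by simp
  qed
  also have "\<dots> = M * (norm v)\<^sup>2 / \<sigma>\<^sup>2"
    using second_moment(2) sigma_pos by (simp add: field_simps power2_eq_square)
  finally show ?thesis .
qed

lemma norm_gradient_le: "norm (gradient \<mu>) \<le> M / \<sigma>"
proof -
  let ?G = "gradient \<mu>"
  let ?t = "\<lambda>w. (w - \<mu>) \<bullet> ?G"
  have "(norm ?G)\<^sup>2 = (\<integral>w. grad_integrand \<mu> w \<bullet> ?G \<partial>lborel)"
    using integrable_grad_integrand by (simp add: gradient_def power2_norm_eq_inner)
  also have "\<dots> \<le> (\<integral>w. M / \<sigma>\<^sup>2 * (gauss_iso_density \<mu> \<sigma> w * \<bar>?t w\<bar>) \<partial>lborel)"
  proof (rule integral_mono)
    show "integrable lborel (\<lambda>w. grad_integrand \<mu> w \<bullet> ?G)"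
      using integrable_grad_integrand by (rule integrable_inner_left)
    show "integrable lborel (\<lambda>w. M / \<sigma>\<^sup>2 * (gauss_iso_density \<mu> \<sigma> w * \<bar>?t w\<bar>))"
      using gauss_iso_density_abs_moment_le(1)[OF sigma_pos] by (rule integrable_mult_right)
    fix w
    have "grad_integrand \<mu> w \<bullet> ?G = gauss_iso_density \<mu> \<sigma> w * k w / \<sigma>\<^sup>2 * ?t w"
      by (simp add: grad_integrand_def)
    also have "\<dots> \<le> gauss_iso_density \<mu> \<sigma> w * k w / \<sigma>\<^sup>2 * \<bar>?t w\<bar>"
      using gauss_iso_density_nonneg[of \<mu> \<sigma> w] k_nonneg[of w] by (intro mult_left_mono) auto
    also have "\<dots> \<le> M / \<sigma>\<^sup>2 * (gauss_iso_density \<mu> \<sigma> w * \<bar>?t w\<bar>)"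
      by (rule gauss_iso_density_times_k_le) simp
    finally show "grad_integrand \<mu> w \<bullet> ?G \<le> M / \<sigma>\<^sup>2 * (gauss_iso_density \<mu> \<sigma> w * \<bar>?t w\<bar>)" .
  qed
  also have "\<dots> = M / \<sigma>\<^sup>2 * (\<integral>w. gauss_iso_density \<mu> \<sigma> w * \<bar>?t w\<bar> \<partial>lborel)"
    by (rule integral_mult_right_zero)
  also have "\<dots> \<le> M / \<sigma>\<^sup>2 * (\<sigma> * norm ?G)"
    using gauss_iso_density_abs_moment_le(2)[OF sigma_pos] M_nonneg by (intro mult_left_mono) auto
  also have "\<dots> = M / \<sigma> * norm ?G"
    using sigma_pos by (simp add: power2_eq_square)
  finally have square_le: "norm ?G * norm ?G \<le> M / \<sigma> * norm ?G"
    by (simp add: power2_eq_square)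
  show ?thesis
  proof (cases "?G = 0")
    case False
    then show ?thesis using mult_right_le_imp_le[OF square_le] by simp
  qed (use M_nonneg sigma_pos in simp)
qed

lemma hessian_inner_gradient_le: "hessian \<nu> (gradient \<mu>) \<bullet> gradient \<mu> \<le> M ^ 3 / \<sigma> ^ 4"
proof -
  have "hessian \<nu> (gradient \<mu>) \<bullet> gradient \<mu> \<le> M * (norm (gradient \<mu>))\<^sup>2 / \<sigma>\<^sup>2"
    by (rule hessian_inner_le)
  also have "\<dots> \<le> M * (M / \<sigma>)\<^sup>2 / \<sigma>\<^sup>2"
    using norm_gradient_le M_nonneg sigma_pos
    by (intro divide_right_mono mult_left_mono power_mono) auto
  also have "\<dots> = M ^ 3 / \<sigma> ^ 4"
    by (simp add: field_simps power2_eq_square power3_eq_cube power4_eq_xxxx)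
  finally show ?thesis .
qed

end

theorem lemma1:
  fixes k :: "'a::euclidean_space \<Rightarrow> real" and \<sigma> M :: real and g :: "'a \<Rightarrow> real"
  assumes "\<sigma> > 0" and "M > 0"
    and "k \<in> borel_measurable lborel"
    and "\<And>w. 0 \<le> k w \<and> k w \<le> M"
    and "AE w in lborel. isCont k w"
    and "\<And>\<mu>. g \<mu> = (\<integral>w. gauss_iso_density \<mu> \<sigma> w * k w \<partial>lborel)"
  shows "\<exists>G. (\<forall>\<mu>. GDERIV g \<mu> :> G \<mu>) \<and> (\<forall>\<mu>. G differentiable at \<mu>) \<and>
           (\<forall>\<mu>1 \<mu>2. frechet_derivative G (at \<mu>2) (G \<mu>1) \<bullet> G \<mu>1
                       \<le> real DIM('a) * M ^ 3 / \<sigma> ^ 4)"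
proof -
  interpret gaussian_smoothing k \<sigma> M
    using assms(1,3,4) by unfold_locales auto
  have "g = (\<lambda>\<mu>. \<integral>w. gauss_iso_density \<mu> \<sigma> w * k w \<partial>lborel)"
    using assms(6) by (rule ext)
  then have "GDERIV g \<mu> :> gradient \<mu>" for \<mu>
    using has_derivative_smoothing by (simp add: gderiv_def)
  moreover have "gradient differentiable at \<mu>" for \<mu>
    using has_derivative_gradient by (auto simp: differentiable_def)
  moreover have "frechet_derivative gradient (at \<mu>2) (gradient \<mu>1) \<bullet> gradient \<mu>1
      \<le> real DIM('a) * M ^ 3 / \<sigma> ^ 4" for \<mu>1 \<mu>2
  proof -
    have "frechet_derivative gradient (at \<mu>2) (gradient \<mu>1) \<bullet> gradient \<mu>1 \<le> 1 * (M ^ 3 / \<sigma> ^ 4)"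
      using frechet_derivative_at[OF has_derivative_gradient] hessian_inner_gradient_le by simp
    also have "\<dots> \<le> real DIM('a) * (M ^ 3 / \<sigma> ^ 4)"
      using M_nonneg assms(1) by (intro mult_right_mono) (auto simp: Suc_le_eq)
    finally show ?thesis by simp
  qed
  ultimately show ?thesis by blast
qed

end
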